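(* Let $\mathcal{N}^+$ be a topological level-1 rooted network on $X$ with root $r$, and let $m=\mathrm{MRCA}(X)$. Then there is $k\ge 0$ and distinct nodes $r=r_1,h_1,r_2,h_2,\dots,r_k,h_k,r_{k+1}=m$ such that the nodes above $m$ are exactly $r_1,h_1,\dots,r_k,h_k$ and the edges above $m$ are exactly, for each $i=1,\dots,k$, two parallel edges from $r_i$ to $h_i$ (so $h_i$ is a hybrid node and the pair forms a $2$-cycle) together with one edge from $h_i$ to $r_{i+1}$. In particular, if $k=0$ then $m=r$.
   Context: Rooted network on $X$: connected directed acyclic graph without loops (at most two parallel edges between two nodes allowed) with a root $r$ (indegree 0, outdegree 2), leaves bijectively labeled by $X$ (indegree 1, outdegree 0), tree nodes (indegree 1, outdegree 2) and hybrid nodes (indegree 2, outdegree 1). A node $v$ is above $u$ if there is a nonempty directed path from $v$ to $u$; an edge with child $y$ is above a node $v$ if $y$ is above or equal to $v$. $\mathrm{MRCA}(X)$ is the lowest node among those lying on every directed path from $r$ to any leaf. A cycle is a cycle of the underlying undirected graph (a $2$-cycle being a pair of parallel edges); the network is level-1 if no two cycles share an edge. *)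

theory Defs
  imports Main
begin

text \<open>A directed multigraph is given by a node set V, an edge set E (edge identifiers),
  and source/target maps src, tgt.  Parallel edges are distinct edge identifiers with the
  same endpoints.\<close>

definition arcs :: "('e \<Rightarrow> 'v) \<Rightarrow> ('e \<Rightarrow> 'v) \<Rightarrow> 'e set \<Rightarrow> ('v \<times> 'v) set" where
  "arcs src tgt E = {(src e, tgt e) | e. e \<in> E}"

definition indeg :: "('e \<Rightarrow> 'v) \<Rightarrow> 'e set \<Rightarrow> 'v \<Rightarrow> nat" where
  "indeg tgt E v = card {e \<in> E. tgt e = v}"

definition outdeg :: "('e \<Rightarrow> 'v) \<Rightarrow> 'e set \<Rightarrow> 'v \<Rightarrow> nat" where
  "outdeg src E v = card {e \<in> E. src e = v}"

text \<open>A cycle of the underlying undirected multigraph: distinct edges e_0..e_{n-1} and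
  distinct nodes v_0..v_{n-1}, n \<ge> 2, with e_i joining v_i and v_{(i+1) mod n}.
  (n = 2 gives a pair of parallel edges, a 2-cycle.)\<close>
definition is_ucycle ::
  "('e \<Rightarrow> 'v) \<Rightarrow> ('e \<Rightarrow> 'v) \<Rightarrow> 'e set \<Rightarrow> 'e list \<Rightarrow> 'v list \<Rightarrow> bool" where
  "is_ucycle src tgt E es vs \<longleftrightarrow>
     length es = length vs \<and> length es \<ge> 2 \<and> distinct es \<and> distinct vs \<and> set es \<subseteq> E \<and>
     (\<forall>i < length es. {src (es ! i), tgt (es ! i)} = {vs ! i, vs ! ((i + 1) mod length es)})"

definition level1 :: "('e \<Rightarrow> 'v) \<Rightarrow> ('e \<Rightarrow> 'v) \<Rightarrow> 'e set \<Rightarrow> bool" where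
  "level1 src tgt E \<longleftrightarrow>
     (\<forall>es1 vs1 es2 vs2. is_ucycle src tgt E es1 vs1 \<and> is_ucycle src tgt E es2 vs2 \<and>
        set es1 \<inter> set es2 \<noteq> {} \<longrightarrow> set es1 = set es2)"

definition is_leaf where "is_leaf src tgt E v \<longleftrightarrow> indeg tgt E v = 1 \<and> outdeg src E v = 0"
definition is_tree_node where "is_tree_node src tgt E v \<longleftrightarrow> indeg tgt E v = 1 \<and> outdeg src E v = 2"
definition is_hybrid where "is_hybrid src tgt E v \<longleftrightarrow> indeg tgt E v = 2 \<and> outdeg src E v = 1"

definition rooted_network ::
  "'v set \<Rightarrow> 'e set \<Rightarrow> ('e \<Rightarrow> 'v) \<Rightarrow> ('e \<Rightarrow> 'v) \<Rightarrow> 'v \<Rightarrow> 'x set \<Rightarrow> ('x \<Rightarrow> 'v) \<Rightarrow> bool" where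
  "rooted_network V E src tgt r X lab \<longleftrightarrow>
     finite V \<and> finite E \<and>
     (\<forall>e \<in> E. src e \<in> V \<and> tgt e \<in> V \<and> src e \<noteq> tgt e) \<and>
     (\<forall>u v. card {e \<in> E. src e = u \<and> tgt e = v} \<le> 2) \<and>
     (\<forall>v. (v, v) \<notin> (arcs src tgt E)\<^sup>+) \<and>
     (\<forall>u \<in> V. \<forall>v \<in> V. (u, v) \<in> (arcs src tgt E \<union> (arcs src tgt E)\<inverse>)\<^sup>*) \<and>
     r \<in> V \<and> indeg tgt E r = 0 \<and> outdeg src E r = 2 \<and>
     (\<forall>v \<in> V - {r}. is_leaf src tgt E v \<or> is_tree_node src tgt E v \<or> is_hybrid src tgt E v) \<and>
     bij_betw lab X {v \<in> V. is_leaf src tgt E v}"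

definition dpath :: "('e \<Rightarrow> 'v) \<Rightarrow> ('e \<Rightarrow> 'v) \<Rightarrow> 'e set \<Rightarrow> 'v \<Rightarrow> 'v \<Rightarrow> 'v list \<Rightarrow> bool" where
  "dpath src tgt E u w p \<longleftrightarrow> p \<noteq> [] \<and> hd p = u \<and> last p = w \<and>
     (\<forall>i. i + 1 < length p \<longrightarrow> (p ! i, p ! (i + 1)) \<in> arcs src tgt E)"

definition above :: "('e \<Rightarrow> 'v) \<Rightarrow> ('e \<Rightarrow> 'v) \<Rightarrow> 'e set \<Rightarrow> 'v \<Rightarrow> 'v \<Rightarrow> bool" where
  "above src tgt E v u \<longleftrightarrow> (v, u) \<in> (arcs src tgt E)\<^sup>+"

definition edge_above :: "('e \<Rightarrow> 'v) \<Rightarrow> ('e \<Rightarrow> 'v) \<Rightarrow> 'e set \<Rightarrow> 'e \<Rightarrow> 'v \<Rightarrow> bool" where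
  "edge_above src tgt E e v \<longleftrightarrow> tgt e = v \<or> above src tgt E (tgt e) v"

definition on_all_root_leaf_paths where
  "on_all_root_leaf_paths V E src tgt r v \<longleftrightarrow> v \<in> V \<and>
     (\<forall>l \<in> V. is_leaf src tgt E l \<longrightarrow> (\<forall>p. dpath src tgt E r l p \<longrightarrow> v \<in> set p))"

definition is_MRCA where
  "is_MRCA V E src tgt r m \<longleftrightarrow> on_all_root_leaf_paths V E src tgt r m \<and>
     (\<forall>v. on_all_root_leaf_paths V E src tgt r v \<longrightarrow> v = m \<or> above src tgt E v m)"

end

theory Submission
  imports Defs
begin

text \<open>
  Call a node a cut node if it lies on every root-to-leaf path; \<open>m\<close> is the lowest cut node, and
  every arc leaving a node strictly above \<open>m\<close> enters a node that still reaches \<open>m\<close>.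
  Suppose a node \<open>c\<close> strictly above \<open>m\<close> had out-edges with distinct heads. The two heads
  reconverge at a lowest common descendant, and the two paths to it close up a cycle that enters
  one of the heads, \<open>x\<close>, by a single edge and leaves it by a single edge. Since \<open>x\<close> is a tree
  node or a hybrid node, its third edge lies on a second cycle through one of these two edges,
  contradicting level-1. So each tree node above \<open>m\<close> sends both edges to one node \<open>h\<close>, which is
  then hybrid, and the unique child of \<open>h\<close> is again a cut node: \<open>m\<close> itself or a tree node above
  \<open>m\<close>. Starting at the root, this produces the chain \<open>r = r\<^sub>1, h\<^sub>1, \<dots>, r\<^sub>k\<^sub>+\<^sub>1 = m\<close>.
\<close>

section \<open>Directed and undirected walks\<close>

fun dwalk :: "('e \<Rightarrow> 'v) \<Rightarrow> ('e \<Rightarrow> 'v) \<Rightarrow> 'e set \<Rightarrow> 'e list \<Rightarrow> 'v list \<Rightarrow> bool" where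
  "dwalk src tgt E [] [v] \<longleftrightarrow> True"
| "dwalk src tgt E (e # es) (u # v # vs) \<longleftrightarrow>
     e \<in> E \<and> src e = u \<and> tgt e = v \<and> dwalk src tgt E es (v # vs)"
| "dwalk src tgt E _ _ \<longleftrightarrow> False"

fun uwalk :: "('e \<Rightarrow> 'v) \<Rightarrow> ('e \<Rightarrow> 'v) \<Rightarrow> 'e set \<Rightarrow> 'e list \<Rightarrow> 'v list \<Rightarrow> bool" where
  "uwalk src tgt E [] [v] \<longleftrightarrow> True"
| "uwalk src tgt E (e # es) (u # v # vs) \<longleftrightarrow>
     e \<in> E \<and> {src e, tgt e} = {u, v} \<and> uwalk src tgt E es (v # vs)"
| "uwalk src tgt E _ _ \<longleftrightarrow> False"

lemma arcs_iff: "(u, v) \<in> arcs src tgt E \<longleftrightarrow> (\<exists>e\<in>E. src e = u \<and> tgt e = v)"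
  by (auto simp: arcs_def)

lemma arcs_swap: "arcs tgt src E = (arcs src tgt E)\<inverse>"
  by (auto simp: arcs_def)

lemma finite_arcs: "finite E \<Longrightarrow> finite (arcs src tgt E)"
  unfolding arcs_def by (simp add: setcompr_eq_image)

lemma is_ucycle_swap: "is_ucycle tgt src E es vs \<longleftrightarrow> is_ucycle src tgt E es vs"
  unfolding is_ucycle_def by (simp add: insert_commute)

lemma dwalk_nonempty: "dwalk src tgt E es vs \<Longrightarrow> vs \<noteq> []"
  by (cases "(src, tgt, E, es, vs)" rule: dwalk.cases) auto

lemma dwalk_reach:
  "dwalk src tgt E es vs \<Longrightarrow> x \<in> set vs \<Longrightarrow>
   (hd vs, x) \<in> (arcs src tgt E)\<^sup>* \<and> (x, last vs) \<in> (arcs src tgt E)\<^sup>*"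
proof (induction src tgt E es vs arbitrary: x rule: dwalk.induct)
  case (2 src tgt E e es u v vs)
  then have "(u, v) \<in> arcs src tgt E"
    by (auto simp: arcs_iff)
  with 2 show ?case
    by (cases "x = u") (auto intro: converse_rtrancl_into_rtrancl)
qed auto

lemma dwalk_reach_tl:
  assumes "dwalk src tgt E es (u # vs)" "x \<in> set vs"
  shows "(u, x) \<in> (arcs src tgt E)\<^sup>+"
proof -
  obtain e es' v vs' where walk: "es = e # es'" "vs = v # vs'"
    using assms by (cases es; cases vs) auto
  with assms have "(u, v) \<in> arcs src tgt E" "(v, x) \<in> (arcs src tgt E)\<^sup>*"
    using dwalk_reach[of src tgt E es' "v # vs'" x] by (auto simp: arcs_iff)
  then show ?thesis
    by auto
qed

lemma dwalk_distinct: "acyclic (arcs src tgt E) \<Longrightarrow> dwalk src tgt E es vs \<Longrightarrow> distinct vs"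
proof (induction src tgt E es vs rule: dwalk.induct)
  case (2 src tgt E e es u v vs)
  then have "u \<notin> set (v # vs)"
    using dwalk_reach_tl[of src tgt E "e # es" u "v # vs"] by (auto simp: acyclic_def)
  with 2 show ?case
    by auto
qed auto

lemma dwalk_edge_ends:
  "dwalk src tgt E es vs \<Longrightarrow> e \<in> set es \<Longrightarrow> e \<in> E \<and> src e \<in> set vs \<and> tgt e \<in> set vs"
  by (induction src tgt E es vs rule: dwalk.induct) auto

lemma dwalk_tgt_in_tl: "dwalk src tgt E es (u # vs) \<Longrightarrow> e \<in> set es \<Longrightarrow> tgt e \<in> set vs"
  by (cases "(src, tgt, E, es, u # vs)" rule: dwalk.cases) (auto dest: dwalk_edge_ends)

lemma dwalk_src_in_tl:
  "dwalk src tgt E (f # es) (u # vs) \<Longrightarrow> e \<in> set es \<Longrightarrow> src e \<in> set vs"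
  by (cases "(src, tgt, E, f # es, u # vs)" rule: dwalk.cases) (auto dest: dwalk_edge_ends)

lemma dwalk_distinct_edges:
  "acyclic (arcs src tgt E) \<Longrightarrow> dwalk src tgt E es vs \<Longrightarrow> distinct es"
proof (induction src tgt E es vs rule: dwalk.induct)
  case (2 src tgt E e es u v vs)
  then have "e \<notin> set es"
    using dwalk_distinct[OF 2(2,3)] dwalk_src_in_tl[OF 2(3)] by auto
  with 2 show ?case
    by auto
qed auto

lemma rtrancl_imp_dwalk:
  "(u, w) \<in> (arcs src tgt E)\<^sup>* \<Longrightarrow> \<exists>es vs. dwalk src tgt E es vs \<and> hd vs = u \<and> last vs = w"
proof (induction rule: converse_rtrancl_induct)
  case base
  show ?case
    by (intro exI[of _ "[]"] exI[of _ "[w]"]) auto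
next
  case (step u y)
  then obtain es vs where walk: "dwalk src tgt E es vs" "hd vs = y" "last vs = w"
    by blast
  moreover obtain e where "e \<in> E" "src e = u" "tgt e = y"
    using step(1) by (auto simp: arcs_iff)
  moreover obtain vs' where "vs = y # vs'"
    using dwalk_nonempty[OF walk(1)] walk(2) by (cases vs) auto
  ultimately show ?case
    by (intro exI[of _ "e # es"] exI[of _ "u # vs"]) auto
qed

lemma uwalk_of_dwalk: "dwalk src tgt E es vs \<Longrightarrow> uwalk src tgt E es vs"
  by (induction src tgt E es vs rule: dwalk.induct) auto

lemma uwalk_nonempty: "uwalk src tgt E es vs \<Longrightarrow> vs \<noteq> []"
  by (cases "(src, tgt, E, es, vs)" rule: uwalk.cases) auto

lemma uwalk_append:
  "uwalk src tgt E es1 vs1 \<Longrightarrow> uwalk src tgt E es2 vs2 \<Longrightarrow> last vs1 = hd vs2 \<Longrightarrow>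
   uwalk src tgt E (es1 @ es2) (vs1 @ tl vs2)"
proof (induction src tgt E es1 vs1 rule: uwalk.induct)
  case (1 src tgt E v)
  then show ?case
    using uwalk_nonempty[OF 1(1)] by (cases vs2) auto
qed auto

lemma uwalk_rev: "uwalk src tgt E es vs \<Longrightarrow> uwalk src tgt E (rev es) (rev vs)"
proof (induction src tgt E es vs rule: uwalk.induct)
  case (2 src tgt E e es u v vs)
  then have "uwalk src tgt E (rev es) (rev (v # vs))" "uwalk src tgt E [e] [v, u]"
    by (auto simp: insert_commute)
  from uwalk_append[OF this] show ?case
    by simp
qed auto

lemma uwalk_nth:
  "uwalk src tgt E es vs \<Longrightarrow> length vs = Suc (length es) \<and> set es \<subseteq> E \<and>
   (\<forall>i<length es. {src (es ! i), tgt (es ! i)} = {vs ! i, vs ! Suc i})"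
  by (induction src tgt E es vs rule: uwalk.induct) (auto simp: nth_Cons split: nat.splits)

lemma ucycle_of_closed_uwalk:
  assumes walk: "uwalk src tgt E es vs" and closed: "last vs = hd vs"
    and "distinct es" "distinct (butlast vs)" "2 \<le> length es"
  shows "is_ucycle src tgt E es (butlast vs)"
proof -
  note props = uwalk_nth[OF walk]
  have "{src (es ! i), tgt (es ! i)} = {butlast vs ! i, butlast vs ! ((i + 1) mod length es)}"
    if i: "i < length es" for i
  proof (cases "Suc i < length es")
    case True
    with props i show ?thesis
      by (simp add: nth_butlast)
  next
    case False
    with i have last_i: "Suc i = length es"
      by simp
    have "butlast vs ! 0 = hd vs"
      using props assms(5) by (cases vs) auto
    also have "\<dots> = last vs"
      using closed by simp
    also have "\<dots> = vs ! Suc i"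
      using props last_i by (subst last_conv_nth) auto
    finally show ?thesis
      using props i last_i by (simp add: nth_butlast)
  qed
  with assms props show ?thesis
    unfolding is_ucycle_def by simp
qed

section \<open>A cycle through two sibling edges\<close>

lemma lowest_common_descendant:
  assumes "wf R" "(x1, w) \<in> R\<^sup>*" "(x2, w) \<in> R\<^sup>*"
  obtains t where "(x1, t) \<in> R\<^sup>*" "(x2, t) \<in> R\<^sup>*" "(t, w) \<in> R\<^sup>*"
    "\<And>y. (x1, y) \<in> R\<^sup>* \<Longrightarrow> (x2, y) \<in> R\<^sup>* \<Longrightarrow> (y, t) \<in> R\<^sup>* \<Longrightarrow> y = t"
proof -
  define T where "T = {t. (x1, t) \<in> R\<^sup>* \<and> (x2, t) \<in> R\<^sup>* \<and> (t, w) \<in> R\<^sup>*}"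
  have "w \<in> T"
    using assms by (simp add: T_def)
  then obtain t where t: "t \<in> T" and lowest: "\<And>y. (y, t) \<in> R\<^sup>+ \<Longrightarrow> y \<notin> T"
    using wf_trancl[OF assms(1)] unfolding wf_eq_minimal by metis
  show thesis
  proof (rule that)
    show "(x1, t) \<in> R\<^sup>*" "(x2, t) \<in> R\<^sup>*" "(t, w) \<in> R\<^sup>*"
      using t by (auto simp: T_def)
    fix y
    assume y: "(x1, y) \<in> R\<^sup>*" "(x2, y) \<in> R\<^sup>*" "(y, t) \<in> R\<^sup>*"
    with \<open>(t, w) \<in> R\<^sup>*\<close> have "y \<in> T"
      by (auto simp: T_def)
    with lowest y(3) show "y = t"
      by (auto simp: rtrancl_eq_or_trancl)
  qed
qed

definition passes_through :: "('e \<Rightarrow> 'v) \<Rightarrow> ('e \<Rightarrow> 'v) \<Rightarrow> 'e set \<Rightarrow> 'v \<Rightarrow> bool" where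
  "passes_through src tgt C x \<longleftrightarrow> (\<exists>g. {e \<in> C. tgt e = x} = {g}) \<and> (\<exists>f. {e \<in> C. src e = x} = {f})"

context
  fixes src tgt :: "'e \<Rightarrow> 'v" and E :: "'e set" and g1 g2 :: 'e and t :: 'v
    and es1 es2 :: "'e list" and vs1 vs2 :: "'v list"
  assumes acyclic: "acyclic (arcs src tgt E)"
    and siblings: "g1 \<in> E" "g2 \<in> E" "g1 \<noteq> g2" "src g1 = src g2"
    and walk1: "dwalk src tgt E es1 vs1" "hd vs1 = tgt g1" "last vs1 = t"
    and walk2: "dwalk src tgt E es2 vs2" "hd vs2 = tgt g2" "last vs2 = t"
    and meet: "set vs1 \<inter> set vs2 \<subseteq> {t}"
begin

lemma sibling_source_not_on_walks: "src g1 \<notin> set vs1" "src g1 \<notin> set vs2"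
proof -
  have arcs: "(src g1, tgt g1) \<in> arcs src tgt E" "(src g1, tgt g2) \<in> arcs src tgt E"
    using siblings by (auto simp: arcs_iff)
  have "(src g1, y) \<in> (arcs src tgt E)\<^sup>+" if "y \<in> set vs1" for y
    using rtrancl_into_trancl2[OF arcs(1)] dwalk_reach[OF walk1(1) that] walk1(2) by simp
  moreover have "(src g1, y) \<in> (arcs src tgt E)\<^sup>+" if "y \<in> set vs2" for y
    using rtrancl_into_trancl2[OF arcs(2)] dwalk_reach[OF walk2(1) that] walk2(2) by simp
  ultimately show "src g1 \<notin> set vs1" "src g1 \<notin> set vs2"
    using acyclic by (auto simp: acyclic_def)
qed

lemma sibling_walks_closed_uwalk:
  "uwalk src tgt E (g1 # es1 @ rev es2 @ [g2]) ((src g1 # vs1 @ tl (rev vs2)) @ [src g1])"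
proof -
  have ne: "vs1 \<noteq> []" "vs2 \<noteq> []"
    using walk1 walk2 by (auto dest: dwalk_nonempty)
  have "uwalk src tgt E [g1] [src g1, tgt g1]" "uwalk src tgt E es1 vs1"
    using siblings walk1 by (auto intro: uwalk_of_dwalk)
  from uwalk_append[OF this] have "uwalk src tgt E (g1 # es1) (src g1 # vs1)"
    using ne walk1 by (cases vs1) auto
  moreover have "uwalk src tgt E (rev es2) (rev vs2)"
    using uwalk_rev[OF uwalk_of_dwalk[OF walk2(1)]] .
  ultimately have "uwalk src tgt E (g1 # es1 @ rev es2) (src g1 # vs1 @ tl (rev vs2))"
    using uwalk_append ne walk1 walk2 by (fastforce simp: hd_rev)
  moreover have "uwalk src tgt E [g2] [tgt g2, src g1]"
    using siblings by (auto simp: insert_commute)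
  moreover have "last ((src g1 # vs1) @ tl (rev vs2)) = last (rev vs2)"
    using ne walk1 walk2 by (cases "rev vs2") (auto simp: hd_rev)
  then have "last (src g1 # vs1 @ tl (rev vs2)) = tgt g2"
    using ne walk2 by (simp add: last_rev)
  ultimately show ?thesis
    using uwalk_append by fastforce
qed

lemma sibling_walks_ucycle:
  "is_ucycle src tgt E (g1 # es1 @ rev es2 @ [g2]) (src g1 # vs1 @ tl (rev vs2))"
proof -
  have no_loop: "src e \<noteq> tgt e" if "e \<in> E" for e
  proof
    assume "src e = tgt e"
    with that have "(src e, src e) \<in> arcs src tgt E"
      by (auto simp: arcs_iff)
    with acyclic show False
      by (auto simp: acyclic_def)
  qed
  have "set es1 \<inter> set es2 = {}"
  proof (rule ccontr)
    assume "set es1 \<inter> set es2 \<noteq> {}"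
    then obtain e where "e \<in> set es1" "e \<in> set es2"
      by blast
    with meet have "e \<in> E" "src e = t" "tgt e = t"
      using dwalk_edge_ends[OF walk1(1)] dwalk_edge_ends[OF walk2(1)] by blast+
    with no_loop show False
      by metis
  qed
  moreover have "e \<notin> set es1 \<union> set es2" if "src e = src g1" for e
    using that sibling_source_not_on_walks
      dwalk_edge_ends[OF walk1(1), of e] dwalk_edge_ends[OF walk2(1), of e] by auto
  then have "g1 \<notin> set es1 \<union> set es2" "g2 \<notin> set es1 \<union> set es2"
    using siblings(4) by auto
  moreover have "distinct es1" "distinct es2"
    using dwalk_distinct_edges[OF acyclic] walk1(1) walk2(1) by blast+
  ultimately have edges: "distinct (g1 # es1 @ rev es2 @ [g2])"
    using siblings(3) by auto
  have "distinct vs1" "distinct (rev vs2)"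
    using dwalk_distinct[OF acyclic] walk1 walk2 by auto
  then have "distinct (src g1 # vs1 @ tl (rev vs2))"
    using meet sibling_source_not_on_walks walk2
    by (cases "rev vs2") (auto simp: rev_swap)
  with ucycle_of_closed_uwalk[OF sibling_walks_closed_uwalk _ edges] show ?thesis
    unfolding butlast_snoc by simp
qed

lemma sibling_walks_pass_through:
  assumes "tgt g1 \<noteq> t"
  shows "passes_through src tgt (set (g1 # es1 @ rev es2 @ [g2])) (tgt g1)"
proof -
  obtain f es1' vs1' where walk1': "es1 = f # es1'" "vs1 = tgt g1 # vs1'"
    using walk1 assms by (cases "(src, tgt, E, es1, vs1)" rule: dwalk.cases) auto
  have "tgt g1 \<notin> set vs1'"
    using dwalk_distinct[OF acyclic walk1(1)] walk1' by simp
  moreover have "tgt g1 \<notin> set vs2"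
    using meet assms walk1' by auto
  moreover have "src f = tgt g1"
    using walk1 walk1' by (cases vs1') auto
  moreover have "tgt g2 \<in> set vs2"
    using walk2(2) hd_in_set[OF dwalk_nonempty[OF walk2(1)]] by simp
  moreover have "src g1 \<notin> set vs1"
    using sibling_source_not_on_walks by simp
  ultimately have "{e \<in> set (g1 # es1 @ rev es2 @ [g2]). tgt e = tgt g1} = {g1}"
    "{e \<in> set (g1 # es1 @ rev es2 @ [g2]). src e = tgt g1} = {f}"
    using walk1' siblings dwalk_tgt_in_tl[OF walk1(1)[unfolded walk1'(2)]]
      dwalk_src_in_tl[OF walk1(1)[unfolded walk1']] dwalk_edge_ends[OF walk2(1)]
    by (fastforce simp: walk1')+
  then show ?thesis
    unfolding passes_through_def by blast
qed

end

lemma cycle_through_sibling_edges: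
  fixes src tgt :: "'e \<Rightarrow> 'v"
  assumes "finite E" and acyclic: "acyclic (arcs src tgt E)"
    and siblings: "g1 \<in> E" "g2 \<in> E" "g1 \<noteq> g2" "src g1 = src g2"
    and "(tgt g1, w) \<in> (arcs src tgt E)\<^sup>*" "(tgt g2, w) \<in> (arcs src tgt E)\<^sup>*"
  obtains es vs t where "is_ucycle src tgt E es vs" "g1 \<in> set es" "g2 \<in> set es"
    "(tgt g1, t) \<in> (arcs src tgt E)\<^sup>*" "(tgt g2, t) \<in> (arcs src tgt E)\<^sup>*"
    "(t, w) \<in> (arcs src tgt E)\<^sup>*"
    "tgt g1 \<noteq> t \<Longrightarrow> passes_through src tgt (set es) (tgt g1)"
proof -
  have "wf (arcs src tgt E)"
    using finite_acyclic_wf[OF finite_arcs[OF \<open>finite E\<close>] acyclic] .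
  from lowest_common_descendant[OF this assms(7,8)] obtain t
    where t: "(tgt g1, t) \<in> (arcs src tgt E)\<^sup>*" "(tgt g2, t) \<in> (arcs src tgt E)\<^sup>*"
      "(t, w) \<in> (arcs src tgt E)\<^sup>*"
    and lowest: "\<And>y. (tgt g1, y) \<in> (arcs src tgt E)\<^sup>* \<Longrightarrow> (tgt g2, y) \<in> (arcs src tgt E)\<^sup>* \<Longrightarrow>
      (y, t) \<in> (arcs src tgt E)\<^sup>* \<Longrightarrow> y = t"
    by blast
  obtain es1 vs1 where walk1: "dwalk src tgt E es1 vs1" "hd vs1 = tgt g1" "last vs1 = t"
    using rtrancl_imp_dwalk[OF t(1)] by blast
  obtain es2 vs2 where walk2: "dwalk src tgt E es2 vs2" "hd vs2 = tgt g2" "last vs2 = t"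
    using rtrancl_imp_dwalk[OF t(2)] by blast
  have "y = t" if "y \<in> set vs1" "y \<in> set vs2" for y
    using lowest[of y] dwalk_reach[OF walk1(1) that(1)] dwalk_reach[OF walk2(1) that(2)] walk1 walk2
    by simp
  then have "set vs1 \<inter> set vs2 \<subseteq> {t}"
    by blast
  note walks = acyclic siblings walk1 walk2 this
  show thesis
    using that[OF sibling_walks_ucycle[OF walks] _ _ t sibling_walks_pass_through[OF walks]]
    by simp
qed

lemma cycle_through_coparent_edges:
  fixes src tgt :: "'e \<Rightarrow> 'v"
  assumes "finite E" "acyclic (arcs src tgt E)"
    and coparents: "g1 \<in> E" "g2 \<in> E" "g1 \<noteq> g2" "tgt g1 = tgt g2"
    and "(w, src g1) \<in> (arcs src tgt E)\<^sup>*" "(w, src g2) \<in> (arcs src tgt E)\<^sup>*"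
  obtains es vs where "is_ucycle src tgt E es vs" "g1 \<in> set es" "g2 \<in> set es"
proof -
  have "acyclic (arcs tgt src E)"
    using assms(2) by (simp add: arcs_swap[of src tgt E])
  moreover have "(src g1, w) \<in> (arcs tgt src E)\<^sup>*" "(src g2, w) \<in> (arcs tgt src E)\<^sup>*"
    using assms(7,8) by (simp_all add: arcs_swap[of src tgt E] rtrancl_converse)
  ultimately obtain es vs where "is_ucycle tgt src E es vs" "g1 \<in> set es" "g2 \<in> set es"
    using cycle_through_sibling_edges[where src = tgt and tgt = src, OF \<open>finite E\<close> _ coparents]
    by blast
  then show thesis
    using that[of es vs] by (simp add: is_ucycle_swap)
qed

section \<open>Root-to-leaf paths and cut nodes\<close>

lemma dpath_singleton: "dpath src tgt E u w [a] \<longleftrightarrow> u = a \<and> w = a"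
  by (auto simp: dpath_def)

lemma dpath_Cons_Cons:
  "dpath src tgt E u w (a # b # q) \<longleftrightarrow>
   u = a \<and> (a, b) \<in> arcs src tgt E \<and> dpath src tgt E b w (b # q)"
proof -
  have "(\<forall>i. i + 1 < length (a # b # q) \<longrightarrow> ((a # b # q) ! i, (a # b # q) ! (i + 1)) \<in> R) \<longleftrightarrow>
    (a, b) \<in> R \<and> (\<forall>j. j + 1 < length (b # q) \<longrightarrow> ((b # q) ! j, (b # q) ! (j + 1)) \<in> R)" for R
    by (simp add: All_less_Suc2)
  then show ?thesis
    unfolding dpath_def by auto
qed

lemma dwalk_dpath: "dwalk src tgt E es vs \<Longrightarrow> dpath src tgt E (hd vs) (last vs) vs"
  by (induction src tgt E es vs rule: dwalk.induct) (auto simp: dpath_singleton dpath_Cons_Cons arcs_iff)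

lemma rtrancl_imp_dpath: "(u, w) \<in> (arcs src tgt E)\<^sup>* \<Longrightarrow> \<exists>p. dpath src tgt E u w p"
  using rtrancl_imp_dwalk dwalk_dpath by metis

lemma dpath_reach:
  "dpath src tgt E u w p \<Longrightarrow> x \<in> set p \<Longrightarrow>
   (u, x) \<in> (arcs src tgt E)\<^sup>* \<and> (x, w) \<in> (arcs src tgt E)\<^sup>*"
proof (induction p arbitrary: u x rule: induct_list012)
  case (3 a b q)
  then have "u = a" "(a, b) \<in> arcs src tgt E" "dpath src tgt E b w (b # q)"
    by (auto simp: dpath_Cons_Cons)
  with "3.IH"(2)[of b b] "3.IH"(2)[of b x] "3.prems"(2) show ?case
    by (auto intro: converse_rtrancl_into_rtrancl)
qed (auto simp: dpath_def)

lemma dpath_append_arc: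
  "dpath src tgt E u x p1 \<Longrightarrow> (x, y) \<in> arcs src tgt E \<Longrightarrow> dpath src tgt E y l p2 \<Longrightarrow>
   dpath src tgt E u l (p1 @ p2)"
proof (induction p1 arbitrary: u rule: induct_list012)
  case (2 a)
  moreover obtain q where "p2 = y # q"
    using "2.prems"(3) unfolding dpath_def by (cases p2) auto
  ultimately show ?case
    by (simp add: dpath_singleton dpath_Cons_Cons)
next
  case (3 a b q)
  then show ?case
    by (auto simp: dpath_Cons_Cons)
qed (simp add: dpath_def)

lemma dpath_successor:
  "dpath src tgt E u l p \<Longrightarrow> v \<in> set p \<Longrightarrow> v \<noteq> l \<Longrightarrow> \<exists>y\<in>set p. (v, y) \<in> arcs src tgt E"
proof (induction p arbitrary: u rule: induct_list012)
  case (3 a b q)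
  then show ?case
    by (cases "v = a") (auto simp: dpath_Cons_Cons)
qed (auto simp: dpath_def)

locale network =
  fixes V :: "'v set" and E :: "'e set" and src tgt :: "'e \<Rightarrow> 'v"
    and r :: 'v and X :: "'x set" and lab :: "'x \<Rightarrow> 'v"
  assumes network: "rooted_network V E src tgt r X lab"
begin

abbreviation A :: "('v \<times> 'v) set" where
  "A \<equiv> arcs src tgt E"

abbreviation cut_node :: "'v \<Rightarrow> bool" where
  "cut_node v \<equiv> on_all_root_leaf_paths V E src tgt r v"

lemma finite_edges: "finite E"
  using network by (simp add: rooted_network_def)

lemma edge_ends_in_V: "e \<in> E \<Longrightarrow> src e \<in> V \<and> tgt e \<in> V"
  using network by (simp add: rooted_network_def)

lemma acyclic_arcs: "acyclic A"
  using network by (simp add: rooted_network_def acyclic_def)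

lemma wf_arcs: "wf A"
  using finite_acyclic_wf[OF finite_arcs[OF finite_edges] acyclic_arcs] .

lemma wf_converse_arcs: "wf (A\<inverse>)"
  using finite_acyclic_wf_converse[OF finite_arcs[OF finite_edges] acyclic_arcs] .

lemma no_path_back: "(x, y) \<in> A\<^sup>+ \<Longrightarrow> (y, x) \<notin> A\<^sup>*"
  using acyclic_arcs by (auto simp: acyclic_def dest: trancl_rtrancl_trancl)

lemma root_in_V: "r \<in> V"
  using network by (simp add: rooted_network_def)

lemma outdeg_root: "outdeg src E r = 2"
  using network by (simp add: rooted_network_def)

lemma no_edge_into_root: "e \<in> E \<Longrightarrow> tgt e \<noteq> r"
  using network finite_edges by (auto simp: rooted_network_def indeg_def)

lemma node_kinds:
  "v \<in> V \<Longrightarrow> v \<noteq> r \<Longrightarrow>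
   is_leaf src tgt E v \<or> is_tree_node src tgt E v \<or> is_hybrid src tgt E v"
  using network by (simp add: rooted_network_def)

lemma arc_ends_in_V: "(u, v) \<in> A \<Longrightarrow> u \<in> V \<and> v \<in> V"
  by (auto simp: arcs_iff dest: edge_ends_in_V)

lemma outdeg_pos: "(u, v) \<in> A \<Longrightarrow> outdeg src E u \<noteq> 0"
  using finite_edges by (auto simp: arcs_iff outdeg_def)

lemma no_arc_from_leaf: "is_leaf src tgt E l \<Longrightarrow> (l, y) \<notin> A"
  using outdeg_pos[of l y] by (auto simp: is_leaf_def)

lemma reachable_from_root: "v \<in> V \<Longrightarrow> (r, v) \<in> A\<^sup>*"
proof (induction v rule: wf_induct_rule[OF wf_arcs])
  case (1 v)
  show ?case
  proof (cases "v = r")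
    case False
    with node_kinds[OF 1(2)] have "indeg tgt E v \<noteq> 0"
      by (auto simp: is_leaf_def is_tree_node_def is_hybrid_def)
    then obtain e where "e \<in> E" "tgt e = v"
      by (auto simp: indeg_def card_gt_0_iff)
    then have "(src e, v) \<in> A"
      by (auto simp: arcs_iff)
    with 1 arc_ends_in_V show ?thesis
      by (meson rtrancl.rtrancl_into_rtrancl)
  qed simp
qed

lemma reaches_leaf: "v \<in> V \<Longrightarrow> \<exists>l\<in>V. is_leaf src tgt E l \<and> (v, l) \<in> A\<^sup>*"
proof (induction v rule: wf_induct_rule[OF wf_converse_arcs])
  case (1 v)
  show ?case
  proof (cases "outdeg src E v = 0")
    case True
    with outdeg_root have "v \<noteq> r"
      by auto
    with 1 True node_kinds[OF 1(2)] show ?thesis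
      by (auto simp: is_leaf_def is_tree_node_def is_hybrid_def)
  next
    case False
    then obtain e where "e \<in> E" "src e = v"
      by (auto simp: outdeg_def card_gt_0_iff)
    then have "(v, tgt e) \<in> A"
      by (auto simp: arcs_iff)
    with 1 arc_ends_in_V show ?thesis
      by (meson converse_rtrancl_into_rtrancl converse_iff)
  qed
qed

lemma cut_node_in_V: "cut_node v \<Longrightarrow> v \<in> V"
  by (simp add: on_all_root_leaf_paths_def)

lemma cut_node_root: "cut_node r"
  using root_in_V by (auto simp: on_all_root_leaf_paths_def dpath_def intro: hd_in_set)

text \<open>Every arc lies on some root-to-leaf path, which must pass through the cut node.\<close>

lemma cut_node_separates: "cut_node v \<Longrightarrow> (u, y) \<in> A \<Longrightarrow> (v, u) \<in> A\<^sup>* \<or> (y, v) \<in> A\<^sup>*"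
proof -
  assume cut: "cut_node v" and arc: "(u, y) \<in> A"
  obtain p1 where p1: "dpath src tgt E r u p1"
    using rtrancl_imp_dpath[OF reachable_from_root] arc_ends_in_V[OF arc] by blast
  obtain l where l: "l \<in> V" "is_leaf src tgt E l" "(y, l) \<in> A\<^sup>*"
    using reaches_leaf arc_ends_in_V[OF arc] by blast
  obtain p2 where p2: "dpath src tgt E y l p2"
    using rtrancl_imp_dpath[OF l(3)] by blast
  have "v \<in> set (p1 @ p2)"
    using cut l dpath_append_arc[OF p1 arc p2] unfolding on_all_root_leaf_paths_def by blast
  then have "v \<in> set p1 \<or> v \<in> set p2"
    by simp
  then show ?thesis
  proof
    assume "v \<in> set p1"
    then show ?thesis
      using dpath_reach[OF p1] by blast
  next
    assume "v \<in> set p2"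
    then show ?thesis
      using dpath_reach[OF p2] by blast
  qed
qed

lemma cut_node_sole_child:
  assumes cut: "cut_node c" and arc: "(c, h) \<in> A" and sole: "\<And>y. (c, y) \<in> A \<Longrightarrow> y = h"
  shows "cut_node h"
proof -
  have "h \<in> set p" if "l \<in> V" "is_leaf src tgt E l" and p: "dpath src tgt E r l p" for l p
  proof -
    have "c \<in> set p" "c \<noteq> l"
      using cut that arc no_arc_from_leaf unfolding on_all_root_leaf_paths_def by blast+
    then show ?thesis
      using dpath_successor[OF p] sole by blast
  qed
  with arc_ends_in_V[OF arc] show ?thesis
    unfolding on_all_root_leaf_paths_def by blast
qed

end

section \<open>The ladder above the MRCA\<close>

lemma rtrancl_through_bottleneck:
  assumes "(c, h) \<in> R" "(h, w) \<in> R" "\<And>y. (c, y) \<in> R \<Longrightarrow> y = h" "\<And>y. (h, y) \<in> R \<Longrightarrow> y = w"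
  shows "(c, v) \<in> R\<^sup>* \<longleftrightarrow> v = c \<or> v = h \<or> (w, v) \<in> R\<^sup>*"
proof
  assume "(c, v) \<in> R\<^sup>*"
  then show "v = c \<or> v = h \<or> (w, v) \<in> R\<^sup>*"
  proof (cases rule: converse_rtranclE)
    case (step y)
    with assms(3) have "(h, v) \<in> R\<^sup>*"
      by blast
    then show ?thesis
      by (cases rule: converse_rtranclE) (use assms(4) in blast)+
  qed simp
next
  assume "v = c \<or> v = h \<or> (w, v) \<in> R\<^sup>*"
  with assms(1,2) show "(c, v) \<in> R\<^sup>*"
    by (auto intro: converse_rtrancl_into_rtrancl)
qed

lemma outdeg_one_child:
  assumes "outdeg src E h = 1"
  obtains w where "(h, w) \<in> arcs src tgt E" "card {e \<in> E. src e = h \<and> tgt e = w} = 1"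
    "\<And>y. (h, y) \<in> arcs src tgt E \<Longrightarrow> y = w"
proof -
  obtain g where g: "{e \<in> E. src e = h} = {g}"
    using assms card_1_singletonE unfolding outdeg_def by blast
  then have "{e \<in> E. src e = h \<and> tgt e = tgt g} = {g}"
    by blast
  with g show thesis
    by (intro that[of "tgt g"]) (auto simp: arcs_iff)
qed

definition twin_ladder :: "'e set \<Rightarrow> ('e \<Rightarrow> 'v) \<Rightarrow> ('e \<Rightarrow> 'v) \<Rightarrow> 'v list \<Rightarrow> 'v list \<Rightarrow> bool" where
  "twin_ladder E src tgt rs hs \<longleftrightarrow> length rs = Suc (length hs) \<and>
     (\<forall>i<length hs. card {e \<in> E. src e = rs ! i \<and> tgt e = hs ! i} = 2 \<and>
                   card {e \<in> E. src e = hs ! i \<and> tgt e = rs ! Suc i} = 1)"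

definition ladder_edges :: "'e set \<Rightarrow> ('e \<Rightarrow> 'v) \<Rightarrow> ('e \<Rightarrow> 'v) \<Rightarrow> 'v list \<Rightarrow> 'v list \<Rightarrow> 'e set" where
  "ladder_edges E src tgt rs hs = (\<Union>i<length hs. {e \<in> E. src e = rs ! i \<and> tgt e = hs ! i} \<union>
                                                {e \<in> E. src e = hs ! i \<and> tgt e = rs ! Suc i})"

lemma twin_ladder_Cons:
  "twin_ladder E src tgt rs hs \<Longrightarrow> card {e \<in> E. src e = c \<and> tgt e = h} = 2 \<Longrightarrow>
   card {e \<in> E. src e = h \<and> tgt e = hd rs} = 1 \<Longrightarrow> twin_ladder E src tgt (c # rs) (h # hs)"
  by (cases rs) (auto simp: twin_ladder_def All_less_Suc2)

lemma ladder_edges_Cons: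
  "rs \<noteq> [] \<Longrightarrow> ladder_edges E src tgt (c # rs) (h # hs) =
     {e \<in> E. src e = c \<and> tgt e = h} \<union> {e \<in> E. src e = h \<and> tgt e = hd rs} \<union> ladder_edges E src tgt rs hs"
  by (cases rs) (auto simp: ladder_edges_def lessThan_Suc_eq_insert_0)

context network
begin

lemma sole_child_not_hybrid:
  assumes cut: "cut_node h" and arc: "(h, w) \<in> A" and sole: "\<And>y. (h, y) \<in> A \<Longrightarrow> y = w"
    and "outdeg src E h = 1"
  shows "\<not> is_hybrid src tgt E w"
proof
  assume "is_hybrid src tgt E w"
  then have "card {e \<in> E. tgt e = w} = 2"
    by (simp add: is_hybrid_def indeg_def)
  moreover obtain g where "g \<in> E" "src g = h" "tgt g = w"
    using arc by (auto simp: arcs_iff)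
  ultimately obtain e where e: "e \<in> E" "tgt e = w" "e \<noteq> g"
    unfolding card_2_iff by blast
  have "src e \<noteq> h"
  proof
    assume "src e = h"
    obtain x where x: "{e \<in> E. src e = h} = {x}"
      using \<open>outdeg src E h = 1\<close> card_1_singletonE unfolding outdeg_def by blast
    have "e \<in> {e \<in> E. src e = h}" "g \<in> {e \<in> E. src e = h}"
      using \<open>src e = h\<close> e \<open>g \<in> E\<close> \<open>src g = h\<close> by auto
    with x \<open>e \<noteq> g\<close> show False
      by auto
  qed
  have parent: "(src e, w) \<in> A"
    using e by (auto simp: arcs_iff)
  from cut_node_separates[OF cut parent] show False
  proof
    assume "(h, src e) \<in> A\<^sup>*"
    with \<open>src e \<noteq> h\<close> obtain y where "(h, y) \<in> A" "(y, src e) \<in> A\<^sup>*"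
      by (auto simp: rtrancl_eq_or_trancl dest: tranclD)
    with sole have "(w, src e) \<in> A\<^sup>*"
      by blast
    with parent show False
      using no_path_back[of "src e" w] by blast
  next
    assume "(w, h) \<in> A\<^sup>*"
    with arc show False
      using no_path_back[of h w] by blast
  qed
qed

end

locale network_mrca = network +
  fixes m
  assumes mrca: "is_MRCA V E src tgt r m"
begin

lemma mrca_cut_node: "cut_node m"
  using mrca by (simp add: is_MRCA_def)

lemma mrca_in_V: "m \<in> V"
  using cut_node_in_V mrca_cut_node .

lemma cut_node_reaches_mrca: "cut_node v \<Longrightarrow> (v, m) \<in> A\<^sup>*"
  using mrca unfolding is_MRCA_def above_def by auto

lemma arc_above_mrca: "(x, m) \<in> A\<^sup>+ \<Longrightarrow> (x, y) \<in> A \<Longrightarrow> (y, m) \<in> A\<^sup>*"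
  using cut_node_separates[OF mrca_cut_node] no_path_back by blast

lemma sole_child_below_mrca:
  assumes "cut_node h" "(h, w) \<in> A" "\<And>y. (h, y) \<in> A \<Longrightarrow> y = w" "outdeg src E h = 1"
  shows "w = m \<or> outdeg src E w = 2"
proof (cases "w = m")
  case False
  moreover have "(w, m) \<in> A\<^sup>*"
    using cut_node_reaches_mrca cut_node_sole_child assms by blast
  ultimately obtain y where "(w, y) \<in> A"
    by (auto simp: rtrancl_eq_or_trancl dest: tranclD)
  moreover obtain g where "g \<in> E" "tgt g = w"
    using assms(2) by (auto simp: arcs_iff)
  then have "w \<in> V" "w \<noteq> r"
    using edge_ends_in_V no_edge_into_root by auto
  ultimately show ?thesis
    using node_kinds no_arc_from_leaf sole_child_not_hybrid[OF assms]
    by (auto simp: is_tree_node_def)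
qed simp

text \<open>Only the part of the network below \<open>c\<close> is described, so that the ladder can be grown
  by induction from \<open>m\<close> upwards; for \<open>c = r\<close> nothing is lost.\<close>

definition ladder_to_mrca where
  "ladder_to_mrca c rs hs \<longleftrightarrow> twin_ladder E src tgt rs hs \<and> distinct (rs @ hs) \<and>
     hd rs = c \<and> last rs = m \<and>
     {v. (c, v) \<in> A\<^sup>* \<and> (v, m) \<in> A\<^sup>+} = set (butlast rs) \<union> set hs \<and>
     {e \<in> E. (c, src e) \<in> A\<^sup>* \<and> (tgt e, m) \<in> A\<^sup>*} = ladder_edges E src tgt rs hs"

lemma ladder_to_mrca_base: "ladder_to_mrca m [m] []"
proof -
  have "(m, src e) \<notin> A\<^sup>*" if "e \<in> E" "(tgt e, m) \<in> A\<^sup>*" for e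
  proof -
    have "(src e, tgt e) \<in> A"
      using that(1) by (auto simp: arcs_iff)
    then have "(src e, m) \<in> A\<^sup>+"
      using that(2) by (rule rtrancl_into_trancl2)
    then show ?thesis
      by (rule no_path_back)
  qed
  moreover have "(m, v) \<notin> A\<^sup>*" if "(v, m) \<in> A\<^sup>+" for v
    using that by (rule no_path_back)
  ultimately show ?thesis
    by (auto simp: ladder_to_mrca_def twin_ladder_def ladder_edges_def)
qed

lemma ladder_to_mrca_extend:
  assumes ladder: "ladder_to_mrca w rs hs" and "(w, m) \<in> A\<^sup>*"
    and arcs: "(c, h) \<in> A" "(h, w) \<in> A"
    and sole: "\<And>y. (c, y) \<in> A \<Longrightarrow> y = h" "\<And>y. (h, y) \<in> A \<Longrightarrow> y = w"
    and card: "card {e \<in> E. src e = c \<and> tgt e = h} = 2" "card {e \<in> E. src e = h \<and> tgt e = w} = 1"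
  shows "ladder_to_mrca c (c # rs) (h # hs)"
proof -
  note reach = rtrancl_through_bottleneck[OF arcs sole]
  have rs: "rs \<noteq> []" "hd rs = w" "last rs = m"
    using ladder by (auto simp: ladder_to_mrca_def twin_ladder_def)
  have "set rs = set (butlast rs @ [last rs])"
    using rs(1) by simp
  then have set_rs: "set rs = insert m (set (butlast rs))"
    using rs(3) by simp
  have above: "(h, m) \<in> A\<^sup>+" "(c, m) \<in> A\<^sup>+"
    using arcs \<open>(w, m) \<in> A\<^sup>*\<close> by (auto intro: rtrancl_into_trancl2)
  have "(c, v) \<in> A\<^sup>* \<and> (v, m) \<in> A\<^sup>+ \<longleftrightarrow> v = c \<or> v = h \<or> (w, v) \<in> A\<^sup>* \<and> (v, m) \<in> A\<^sup>+" for v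
    using reach[of v] above by auto
  then have nodes:
    "{v. (c, v) \<in> A\<^sup>* \<and> (v, m) \<in> A\<^sup>+} = {c, h} \<union> {v. (w, v) \<in> A\<^sup>* \<and> (v, m) \<in> A\<^sup>+}"
    by auto
  have "(w, v) \<in> A\<^sup>*" if "v \<in> set rs \<union> set hs" for v
  proof -
    have "v \<in> set (butlast rs) \<union> set hs \<or> v = m"
      using that set_rs by auto
    then show ?thesis
      using ladder \<open>(w, m) \<in> A\<^sup>*\<close> by (auto simp: ladder_to_mrca_def)
  qed
  moreover have "(c, w) \<in> A\<^sup>+" "(h, w) \<in> A\<^sup>+" "(c, h) \<in> A\<^sup>+"
    using arcs by auto
  ultimately have "c \<notin> set rs \<union> set hs" "h \<notin> set rs \<union> set hs" "c \<noteq> h"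
    using no_path_back[of c w] no_path_back[of h w] no_path_back[of c h] by auto
  then have "distinct ((c # rs) @ (h # hs))"
    using ladder by (simp add: ladder_to_mrca_def)
  moreover have "{e \<in> E. (c, src e) \<in> A\<^sup>* \<and> (tgt e, m) \<in> A\<^sup>*} =
      {e \<in> E. src e = c \<and> tgt e = h} \<union> {e \<in> E. src e = h \<and> tgt e = w} \<union>
      {e \<in> E. (w, src e) \<in> A\<^sup>* \<and> (tgt e, m) \<in> A\<^sup>*}"
  proof -
    have "tgt e = h" if "e \<in> E" "src e = c" for e
      using sole(1) that by (auto simp: arcs_iff)
    moreover have "tgt e = w" if "e \<in> E" "src e = h" for e
      using sole(2) that by (auto simp: arcs_iff)
    ultimately show ?thesis
      using reach above \<open>(w, m) \<in> A\<^sup>*\<close> by (auto dest: trancl_into_rtrancl)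
  qed
  moreover have "butlast (c # rs) = c # butlast rs" "last (c # rs) = m"
    using rs by simp_all
  ultimately show ?thesis
    using ladder rs card nodes
    by (auto simp: ladder_to_mrca_def twin_ladder_Cons ladder_edges_Cons)
qed

end

locale level1_network = network_mrca +
  assumes level1: "level1 src tgt E"
begin

lemma cycle_cannot_pass_above_mrca:
  assumes cycle: "is_ucycle src tgt E es vs" and pass: "passes_through src tgt (set es) x"
    and above: "(x, m) \<in> A\<^sup>+"
  shows False
proof -
  obtain g f where g: "{e \<in> set es. tgt e = x} = {g}" and f: "{e \<in> set es. src e = x} = {f}"
    using pass by (auto simp: passes_through_def)
  have "set es \<subseteq> E"
    using cycle by (simp add: is_ucycle_def)
  with g f have edges: "g \<in> E" "tgt g = x" "f \<in> E" "src f = x"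
    by auto
  have same_cycle: "set es' = set es" if "is_ucycle src tgt E es' vs'" "e \<in> set es'" "e \<in> set es" for es' vs' e
    using level1 cycle that unfolding level1_def by blast
  have "x \<in> V" "x \<noteq> r" "(x, tgt f) \<in> A"
    using edges edge_ends_in_V no_edge_into_root by (auto simp: arcs_iff)
  with node_kinds consider "is_tree_node src tgt E x" | "is_hybrid src tgt E x"
    using no_arc_from_leaf by blast
  then show False
  proof cases
    case 1
    then obtain e where e: "e \<in> E" "src e = x" "e \<noteq> f"
      using edges unfolding is_tree_node_def outdeg_def card_2_iff by blast
    have "(tgt f, m) \<in> A\<^sup>*" "(tgt e, m) \<in> A\<^sup>*"
      using arc_above_mrca[OF above] edges e by (auto simp: arcs_iff)
    with cycle_through_sibling_edges[OF finite_edges acyclic_arcs \<open>f \<in> E\<close> e(1) e(3)[symmetric]]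
    obtain es' vs' where "is_ucycle src tgt E es' vs'" "f \<in> set es'" "e \<in> set es'"
      using edges e by metis
    with same_cycle f e g show False
      by blast
  next
    case 2
    then obtain e where e: "e \<in> E" "tgt e = x" "e \<noteq> g"
      using edges unfolding is_hybrid_def indeg_def card_2_iff by blast
    have "(r, src g) \<in> A\<^sup>*" "(r, src e) \<in> A\<^sup>*"
      using reachable_from_root edge_ends_in_V edges e by auto
    with cycle_through_coparent_edges[OF finite_edges acyclic_arcs \<open>g \<in> E\<close> e(1) e(3)[symmetric]]
    obtain es' vs' where "is_ucycle src tgt E es' vs'" "g \<in> set es'" "e \<in> set es'"
      using edges e by metis
    with same_cycle f e g show False
      by blast
  qed
qed

lemma sibling_heads_above_mrca_ordered:
  assumes "g1 \<in> E" "g2 \<in> E" "g1 \<noteq> g2" "src g1 = src g2" and above: "(src g1, m) \<in> A\<^sup>+"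
  shows "(tgt g2, tgt g1) \<in> A\<^sup>*"
proof (rule ccontr)
  assume unordered: "(tgt g2, tgt g1) \<notin> A\<^sup>*"
  have "(tgt g1, m) \<in> A\<^sup>*" "(tgt g2, m) \<in> A\<^sup>*"
    using arc_above_mrca[OF above] assms by (auto simp: arcs_iff)
  with cycle_through_sibling_edges[OF finite_edges acyclic_arcs assms(1-4)]
  obtain es vs t where cycle: "is_ucycle src tgt E es vs"
    and t: "(tgt g1, t) \<in> A\<^sup>*" "(tgt g2, t) \<in> A\<^sup>*" "(t, m) \<in> A\<^sup>*"
    and pass: "tgt g1 \<noteq> t \<Longrightarrow> passes_through src tgt (set es) (tgt g1)"
    by metis
  have "tgt g1 \<noteq> t"
    using unordered t by auto
  moreover from this t have "(tgt g1, m) \<in> A\<^sup>+"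
    by (auto simp: rtrancl_eq_or_trancl)
  ultimately show False
    using cycle_cannot_pass_above_mrca[OF cycle pass] by blast
qed

lemma parallel_out_edges_above_mrca:
  assumes "g1 \<in> E" "g2 \<in> E" "src g1 = src g2" "(src g1, m) \<in> A\<^sup>+"
  shows "tgt g1 = tgt g2"
proof (cases "g1 = g2")
  case False
  with assms have "(tgt g2, tgt g1) \<in> A\<^sup>*" "(tgt g1, tgt g2) \<in> A\<^sup>*"
    using sibling_heads_above_mrca_ordered[of g1 g2] sibling_heads_above_mrca_ordered[of g2 g1] by auto
  then show ?thesis
    using acyclic_impl_antisym_rtrancl[OF acyclic_arcs] by (auto dest: antisymD)
qed simp

lemma tree_node_above_mrca:
  assumes cut: "cut_node c" and above: "(c, m) \<in> A\<^sup>+" and "outdeg src E c = 2"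
  obtains h where "(c, h) \<in> A" "\<And>y. (c, y) \<in> A \<Longrightarrow> y = h"
    "card {e \<in> E. src e = c \<and> tgt e = h} = 2" "cut_node h" "outdeg src E h = 1"
proof -
  obtain e1 e2 where e: "e1 \<noteq> e2" "{e \<in> E. src e = c} = {e1, e2}"
    using \<open>outdeg src E c = 2\<close> unfolding outdeg_def card_2_iff by blast
  define h where "h = tgt e1"
  have e1: "e1 \<in> E" "src e1 = c"
    using e(2) by blast+
  have all_to_h: "tgt e = h" if "e \<in> E" "src e = c" for e
    using parallel_out_edges_above_mrca[of e e1] e1 that above by (simp add: h_def)
  have sole: "y = h" if "(c, y) \<in> A" for y
    using all_to_h that by (auto simp: arcs_iff)
  have arc: "(c, h) \<in> A"
    using e1 by (auto simp: arcs_iff h_def)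
  have two: "{e \<in> E. src e = c \<and> tgt e = h} = {e1, e2}"
    using e all_to_h by blast
  then have "{e1, e2} \<subseteq> {e \<in> E. tgt e = h}"
    by blast
  with finite_edges have "card {e1, e2} \<le> indeg tgt E h"
    unfolding indeg_def by (intro card_mono) auto
  then have "indeg tgt E h \<ge> 2"
    using e(1) by simp
  moreover have "h \<in> V" "h \<noteq> r"
    using arc_ends_in_V[OF arc] no_edge_into_root e by (auto simp: h_def)
  ultimately have "outdeg src E h = 1"
    using node_kinds[of h] by (auto simp: is_leaf_def is_tree_node_def is_hybrid_def)
  moreover have "card {e \<in> E. src e = c \<and> tgt e = h} = 2"
    using two e(1) by simp
  ultimately show thesis
    using that[OF arc sole] cut_node_sole_child[OF cut arc sole] by blast
qed

lemma ladder_to_mrca_exists: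
  assumes "cut_node c" "(c, m) \<in> A\<^sup>*" "c = m \<or> outdeg src E c = 2"
  shows "\<exists>rs hs. ladder_to_mrca c rs hs"
  using assms
proof (induction c rule: wf_induct_rule[OF wf_trancl[OF wf_converse_arcs]])
  case (1 c)
  show ?case
  proof (cases "c = m")
    case True
    then show ?thesis
      using ladder_to_mrca_base by blast
  next
    case False
    with "1.prems" have "(c, m) \<in> A\<^sup>+" "outdeg src E c = 2"
      by (auto simp: rtrancl_eq_or_trancl)
    then obtain h where h: "(c, h) \<in> A" "\<And>y. (c, y) \<in> A \<Longrightarrow> y = h"
      "card {e \<in> E. src e = c \<and> tgt e = h} = 2" "cut_node h" "outdeg src E h = 1"
      using tree_node_above_mrca[OF "1.prems"(1)] by blast
    obtain w where w: "(h, w) \<in> A" "card {e \<in> E. src e = h \<and> tgt e = w} = 1"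
      "\<And>y. (h, y) \<in> A \<Longrightarrow> y = w"
      using outdeg_one_child[OF h(5)] by blast
    have "cut_node w"
      using cut_node_sole_child[OF h(4) w(1,3)] .
    then have "(w, m) \<in> A\<^sup>*"
      by (rule cut_node_reaches_mrca)
    moreover have "(w, c) \<in> (A\<inverse>)\<^sup>+"
      using h(1) w(1) by (auto simp: trancl_converse)
    ultimately obtain rs hs where "ladder_to_mrca w rs hs"
      using "1.IH" \<open>cut_node w\<close> sole_child_below_mrca[OF h(4) w(1,3) h(5)] by blast
    from ladder_to_mrca_extend[OF this \<open>(w, m) \<in> A\<^sup>*\<close> h(1) w(1) h(2) w(3) h(3) w(2)]
    show ?thesis
      by blast
  qed
qed

lemma nodes_above_mrca: "{v \<in> V. above src tgt E v m} = {v. (r, v) \<in> A\<^sup>* \<and> (v, m) \<in> A\<^sup>+}"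
  using reachable_from_root arc_ends_in_V by (auto simp: above_def dest: tranclD)

lemma edges_above_mrca:
  "{e \<in> E. edge_above src tgt E e m} = {e \<in> E. (r, src e) \<in> A\<^sup>* \<and> (tgt e, m) \<in> A\<^sup>*}"
  using reachable_from_root edge_ends_in_V
  by (auto simp: edge_above_def above_def rtrancl_eq_or_trancl)

end

theorem mainTheorem6:
  fixes V :: "'v set" and E :: "'e set" and src tgt :: "'e \<Rightarrow> 'v"
    and r m :: 'v and X :: "'x set" and lab :: "'x \<Rightarrow> 'v"
  assumes "rooted_network V E src tgt r X lab"
    and "level1 src tgt E"
    and "is_MRCA V E src tgt r m"
  shows "\<exists>k rs hs. length rs = k + 1 \<and> length hs = k \<and> distinct (rs @ hs) \<and>
           set (rs @ hs) \<subseteq> V \<and> rs ! 0 = r \<and> rs ! k = m \<and>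
           {v \<in> V. above src tgt E v m} = set (take k rs) \<union> set hs \<and>
           (\<forall>i < k. card {e \<in> E. src e = rs ! i \<and> tgt e = hs ! i} = 2 \<and>
                    card {e \<in> E. src e = hs ! i \<and> tgt e = rs ! (i + 1)} = 1) \<and>
           {e \<in> E. edge_above src tgt E e m} =
             (\<Union>i < k. {e \<in> E. src e = rs ! i \<and> tgt e = hs ! i} \<union>
                       {e \<in> E. src e = hs ! i \<and> tgt e = rs ! (i + 1)})"
proof -
  interpret level1_network V E src tgt r X lab m
    using assms by unfold_locales
  obtain rs hs where ladder: "ladder_to_mrca r rs hs"
    using ladder_to_mrca_exists[OF cut_node_root] reachable_from_root[OF mrca_in_V] outdeg_root
    by blast
  then have "rs \<noteq> []" "length rs = length hs + 1" "hd rs = r" "last rs = m"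
    by (auto simp: ladder_to_mrca_def twin_ladder_def)
  then have rs: "rs ! 0 = r" "rs ! length hs = m" "take (length hs) rs = butlast rs"
    by (simp_all add: hd_conv_nth last_conv_nth butlast_conv_take)
  have "set rs = set (butlast rs @ [last rs])"
    using \<open>rs \<noteq> []\<close> by simp
  then have "set (rs @ hs) = insert m {v \<in> V. above src tgt E v m}"
    using ladder nodes_above_mrca \<open>last rs = m\<close> by (auto simp: ladder_to_mrca_def)
  then have "set (rs @ hs) \<subseteq> V"
    using mrca_in_V by auto
  show ?thesis
    using ladder rs \<open>set (rs @ hs) \<subseteq> V\<close> nodes_above_mrca edges_above_mrca
    by (intro exI[of _ "length hs"] exI[of _ rs] exI[of _ hs])
      (auto simp: ladder_to_mrca_def twin_ladder_def ladder_edges_def)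
qed

end
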